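(* Let $\delta>0$. Then: (a) for $d>c>0$ and $a>0$, the function $x\mapsto {}_1F_1(a;c+\delta;x)\,{}_1F_1(a;d;x)-{}_1F_1(a;d+\delta;x)\,{}_1F_1(a;c;x)$ has negative power series coefficients, starting with the coefficient at $x$; (b) the function $c\mapsto {}_1F_1(a;c+\delta;x)/{}_1F_1(a;c;x)$ is monotone increasing on $(0,\infty)$ (equivalently, $c\mapsto {}_1F_1(a;c;x)$ is log-convex there) for fixed $a>0,x>0$ or for fixed $a<0,x<0$; (c) the inequality ${}_1F_1(a+\delta;c+\delta;x)^2\le {}_1F_1(a+2\delta;c+2\delta;x)\,{}_1F_1(a;c;x)$ holds for $a\ge c>0$, $x>0$, and for $a\le c$, $c>0$, $x\le 0$; so that $\mu\mapsto{}_1F_1(a+\mu;c+\mu;x)$ is log-convex on $[0,\infty)$ under these restrictions on the parameters; (d) for $c>d>0$, $a>0$ and every integer $m\ge1$, \[ {}_4F_3\left(\begin{matrix}-m,\ -d-m,\ a,\ 1-cm/(c+d)\\ 1-a-m,\ c+1,\ -cm/(c+d)\end{matrix}\,\middle|\,-1\right)>0, \] and for $d>c>0$ the sign of this inequality is reversed.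
   Context: $(a)_k=a(a+1)\cdots(a+k-1)$ is the Pochhammer symbol. ${}_1F_1(a;c;x)=\sum_{k\ge0}\frac{(a)_k}{(c)_k}\frac{x^k}{k!}$. The generalized hypergeometric function is ${}_pF_q\left(\begin{matrix}a_1,\dots,a_p\\ b_1,\dots,b_q\end{matrix}\middle|x\right)=\sum_{n\ge0}\frac{(a_1)_n\cdots(a_p)_n}{(b_1)_n\cdots(b_q)_n}\frac{x^n}{n!}$, terminating at $n=m$ when an upper parameter equals $-m$. *)

theory Defs
  imports "HOL-Analysis.Analysis"
begin

definition hyp1F1 :: "real \<Rightarrow> real \<Rightarrow> real \<Rightarrow> real" where
  "hyp1F1 a c x = (\<Sum>k. pochhammer a k / pochhammer c k * x ^ k / fact k)"

text \<open>The terminating 4F3 of part (d):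
  4F3(-m, -d-m, a, 1-t ; 1-a-m, c+1, -t | -1) with t = c m/(c+d).
  The ratio of Pochhammer symbols (1-t)_n / (-t)_n is the polynomial (t-n)/t
  (it is written in that cancelled form so that the sum is also meaningful when
  t happens to be an integer < m, where both symbols vanish).\<close>
definition hyp4F3_d :: "real \<Rightarrow> real \<Rightarrow> real \<Rightarrow> nat \<Rightarrow> real" where
  "hyp4F3_d a c d m =
     (let t = c * real m / (c + d) in
      \<Sum>n = 0..m. pochhammer (- real m) n * pochhammer (- d - real m) n * pochhammer a n
                   / (pochhammer (1 - a - real m) n * pochhammer (c + 1) n)
                   * ((t - real n) / t) * (-1) ^ n / fact n)"

end

theory Submission
  imports Defs "HOL-Computational_Algebra.Formal_Power_Series"
begin

text \<open>
  The coefficient of x^n in 1F1(a;c+\<delta>;x) 1F1(a;d;x) - 1F1(a;d+\<delta>;x) 1F1(a;c;x) is the sum over i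
  of (a)_i (a)_(n-i) / (i! (n-i)!) times 1/((c+\<delta>)_i (d)_(n-i)) - 1/((d+\<delta>)_i (c)_(n-i)).
  Pairing the terms i and n - i makes every pair negative, because k \<mapsto> (c)_k/(d)_k decreases
  while z \<mapsto> (z)_k/(z+\<delta>)_k increases. For \<delta> = 1 and n = m, the reflection formula for Pochhammer
  symbols turns the same coefficient into a positive multiple of the 4F3 of part (d).

  For A, C, y > 0 the k-th term of 1F1(A;C;y) is y^k/k! times the product of the factors
  (A+j)/(C+j), j < k. If A and C depend on a parameter so that every ln(A+j) - ln(C+j) is convex,
  all terms are log-convex, hence so is their sum. This covers c \<mapsto> 1F1(a;c;x) and
  \<mu> \<mapsto> 1F1(a+\<mu>;c+\<mu>;x); for negative arguments Kummer's transformation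
  1F1(a;c;x) = e^x 1F1(c-a;c;-x) restores positive terms. Log-convexity then yields the monotone
  shift ratio and the Turan-type inequality.
\<close>

section \<open>Convergence and Kummer's transformation\<close>

definition hyp1F1_coeff :: "real \<Rightarrow> real \<Rightarrow> nat \<Rightarrow> real" where
  "hyp1F1_coeff a c k = pochhammer a k / (pochhammer c k * fact k)"

lemma hyp1F1_eq_suminf: "hyp1F1 a c x = (\<Sum>k. hyp1F1_coeff a c k * x ^ k)"
  by (simp add: hyp1F1_def hyp1F1_coeff_def)

lemma hyp1F1_coeff_Suc:
  "hyp1F1_coeff a c (Suc k) = hyp1F1_coeff a c k * ((a + k) / ((c + k) * (real k + 1)))"
  by (simp add: hyp1F1_coeff_def pochhammer_Suc divide_inverse ac_simps)

lemma hyp1F1_coeff_pos: "a > 0 \<Longrightarrow> c > 0 \<Longrightarrow> hyp1F1_coeff a c k > 0"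
  by (simp add: hyp1F1_coeff_def pochhammer_pos)

lemma hyp1F1_coeff_nonneg: "a \<ge> 0 \<Longrightarrow> c > 0 \<Longrightarrow> hyp1F1_coeff a c k \<ge> 0"
  by (cases "a = 0")
    (auto simp: hyp1F1_coeff_def pochhammer_0_left
          intro!: divide_nonneg_pos mult_pos_pos pochhammer_nonneg pochhammer_pos)

lemma summable_norm_hyp1F1_series:
  assumes c: "c > 0"
  shows "summable (\<lambda>k. norm (hyp1F1_coeff a c k * x ^ k))"
proof -
  define M where "M = (1 + \<bar>a\<bar> / c) * \<bar>x\<bar>"
  show ?thesis
  proof (rule summable_ratio_test[where c = "1/2" and N = "nat \<lceil>2 * M\<rceil>"])
    fix k assume k: "k \<ge> nat \<lceil>2 * M\<rceil>"
    have "real (nat \<lceil>2 * M\<rceil>) \<le> real k"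
      using k by simp
    then have M_le: "M \<le> (real k + 1) / 2"
      using real_nat_ceiling_ge[of "2 * M"] by simp
    have "\<bar>a\<bar> / c * k \<ge> 0"
      using c by simp
    then have "\<bar>a + k\<bar> \<le> \<bar>a\<bar> + k + \<bar>a\<bar> / c * k"
      by linarith
    also have "\<dots> \<le> (1 + \<bar>a\<bar> / c) * (c + k)"
      using c by (simp add: field_simps)
    finally have "\<bar>a + k\<bar> / (c + k) \<le> 1 + \<bar>a\<bar> / c"
      using c by (simp add: divide_le_eq)
    then have "\<bar>a + k\<bar> / (c + k) * \<bar>x\<bar> \<le> M"
      unfolding M_def by (rule mult_right_mono) simp
    also note M_le
    finally have bound: "\<bar>a + k\<bar> / (c + k) * \<bar>x\<bar> \<le> (real k + 1) / 2" .
    have "\<bar>(a + k) / ((c + k) * (real k + 1)) * x\<bar> = \<bar>a + k\<bar> / (c + k) * \<bar>x\<bar> / (real k + 1)"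
      using c by (simp add: abs_mult abs_divide)
    also have "\<dots> \<le> ((real k + 1) / 2) / (real k + 1)"
      using bound by (rule divide_right_mono) simp
    also have "\<dots> = 1 / 2"
      by simp
    finally have ratio: "\<bar>(a + k) / ((c + k) * (real k + 1)) * x\<bar> \<le> 1 / 2" .
    show "norm (norm (hyp1F1_coeff a c (Suc k) * x ^ Suc k))
        \<le> 1/2 * norm (norm (hyp1F1_coeff a c k * x ^ k))"
      using mult_left_mono[OF ratio abs_ge_zero[of "hyp1F1_coeff a c k * x ^ k"]]
      by (simp add: hyp1F1_coeff_Suc abs_mult ac_simps)
  qed simp
qed

lemma hyp1F1_sums: "c > 0 \<Longrightarrow> (\<lambda>k. hyp1F1_coeff a c k * x ^ k) sums hyp1F1 a c x"
  using summable_norm_cancel[OF summable_norm_hyp1F1_series]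
  by (simp add: hyp1F1_eq_suminf summable_sums)

lemma hyp1F1_ge_one:
  assumes "a \<ge> 0" "c > 0" "x \<ge> 0"
  shows "hyp1F1 a c x \<ge> 1"
proof -
  have "(\<Sum>k\<in>{0}. hyp1F1_coeff a c k * x ^ k) \<le> hyp1F1 a c x"
    unfolding hyp1F1_eq_suminf using assms
    by (intro sum_le_suminf summable_norm_cancel[OF summable_norm_hyp1F1_series])
      (auto intro!: mult_nonneg_nonneg hyp1F1_coeff_nonneg)
  then show ?thesis by (simp add: hyp1F1_coeff_def)
qed

lemma hyp1F1_zero_left: "hyp1F1 0 c x = 1"
proof -
  have "(\<lambda>k. hyp1F1_coeff 0 c k * x ^ k) = (\<lambda>k. if k = 0 then 1 else 0)"
    by (simp add: fun_eq_iff hyp1F1_coeff_def pochhammer_0_left)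
  then show ?thesis
    using sums_single[of 0 "\<lambda>_. 1::real"] by (simp add: hyp1F1_eq_suminf sums_iff)
qed

lemma hyp1F1_zero_right: "hyp1F1 a c 0 = 1"
  using powser_zero[of "hyp1F1_coeff a c"] by (simp add: hyp1F1_eq_suminf hyp1F1_coeff_def)

lemma pochhammer_reflect:
  fixes z :: "'a::comm_ring_1"
  assumes "i \<le> m"
  shows "pochhammer (1 - z - of_nat m) i * pochhammer z (m - i) = (-1) ^ i * pochhammer z m"
proof -
  have "pochhammer (1 - z - of_nat m) i = (-1) ^ i * pochhammer (z + of_nat (m - i)) i"
    using pochhammer_minus[of "z + of_nat m - 1" i] assms by (simp add: of_nat_diff algebra_simps)
  moreover have "pochhammer z m = pochhammer z (m - i) * pochhammer (z + of_nat (m - i)) i"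
    using pochhammer_product[of "m - i" m z] assms by simp
  ultimately show ?thesis by (simp add: ac_simps)
qed

lemma pochhammer_minus_of_nat:
  assumes "i \<le> k"
  shows "pochhammer (- of_nat k) i = (-1) ^ i * fact k / (fact (k - i) :: 'a::field_char_0)"
proof -
  have "pochhammer (- of_nat k) i * fact (k - i) = (-1) ^ i * (fact k :: 'a)"
    using pochhammer_reflect[OF assms, of 1] by (simp add: pochhammer_fact)
  then show ?thesis by (simp add: eq_divide_eq)
qed

lemma hyp1F1_same_eq_exp:
  assumes "c > 0"
  shows "hyp1F1 c c x = exp x"
proof -
  have "hyp1F1_coeff c c k = 1 / fact k" for k
    using pochhammer_pos[OF assms, of k] by (simp add: hyp1F1_coeff_def)
  then show ?thesis
    using exp_converges[of x] by (simp add: hyp1F1_eq_suminf sums_iff divide_inverse ac_simps)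
qed

lemma kummer_transformation:
  assumes c: "c > 0"
  shows "hyp1F1 a c x = exp x * hyp1F1 (c - a) c (- x)"
proof -
  have "(\<lambda>k. \<Sum>i\<le>k. hyp1F1_coeff (c - a) c i * (- x) ^ i * (hyp1F1_coeff 1 1 (k - i) * x ^ (k - i)))
          sums (hyp1F1 (c - a) c (- x) * hyp1F1 1 1 x)"
    unfolding hyp1F1_eq_suminf
    by (intro Cauchy_product_sums summable_norm_hyp1F1_series) (use c in auto)
  moreover have "(\<Sum>i\<le>k. hyp1F1_coeff (c - a) c i * (- x) ^ i * (hyp1F1_coeff 1 1 (k - i) * x ^ (k - i)))
        = hyp1F1_coeff a c k * x ^ k" for k
  proof -
    have c_ok: "\<forall>i\<in>{0..<k}. c \<noteq> - of_nat i"
      using c by (auto simp: minus_equation_iff[of c])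
    have "(\<Sum>i\<le>k. hyp1F1_coeff (c - a) c i * (- x) ^ i * (hyp1F1_coeff 1 1 (k - i) * x ^ (k - i)))
        = x ^ k / fact k * (\<Sum>i=0..k. pochhammer (c - a) i * pochhammer (- of_nat k) i
                                         / (fact i * pochhammer c i))"
      unfolding sum_distrib_left atMost_atLeast0
    proof (rule sum.cong[OF refl])
      fix i assume "i \<in> {0..k}"
      then have ik: "i \<le> k" by simp
      have "(- x) ^ i * x ^ (k - i) = (-1) ^ i * x ^ k"
        using ik by (metis le_add_diff_inverse mult.assoc power_add power_minus)
      then show "hyp1F1_coeff (c - a) c i * (- x) ^ i * (hyp1F1_coeff 1 1 (k - i) * x ^ (k - i))
          = x ^ k / fact k * (pochhammer (c - a) i * pochhammer (- of_nat k) i / (fact i * pochhammer c i))"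
        by (simp add: hyp1F1_coeff_def pochhammer_minus_of_nat[OF ik] pochhammer_fact[symmetric] mult.assoc)
          (simp add: ac_simps)
    qed
    also have "\<dots> = hyp1F1_coeff a c k * x ^ k"
      using Vandermonde_pochhammer[OF c_ok, of "c - a"] by (simp add: hyp1F1_coeff_def mult.commute)
    finally show ?thesis .
  qed
  ultimately have "(\<lambda>k. hyp1F1_coeff a c k * x ^ k) sums (hyp1F1 (c - a) c (- x) * exp x)"
    by (simp add: hyp1F1_same_eq_exp)
  then have "hyp1F1 a c x = hyp1F1 (c - a) c (- x) * exp x"
    by (rule sums_unique2[OF hyp1F1_sums[OF c]])
  then show ?thesis by (simp only: mult.commute)
qed

section \<open>Log-convexity in the parameters\<close>

lemma convex_on_cong:
  "convex_on S f \<Longrightarrow> (\<And>x. x \<in> S \<Longrightarrow> f x = g x) \<Longrightarrow> convex_on S g"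
  by (auto simp: convex_on_def convex_def)

text \<open>By Young's inequality, each term at a convex combination of x and y is at most
  M = A^(1-u) B^u times the same combination of the terms at x and y normalised by their sums.\<close>
lemma convex_on_ln_suminf:
  fixes g :: "nat \<Rightarrow> real \<Rightarrow> real"
  assumes S: "convex S"
    and pos: "\<And>k t. t \<in> S \<Longrightarrow> g k t > 0"
    and summable: "\<And>t. t \<in> S \<Longrightarrow> summable (\<lambda>k. g k t)"
    and log_convex: "\<And>k. convex_on S (\<lambda>t. ln (g k t))"
  shows "convex_on S (\<lambda>t. ln (\<Sum>k. g k t))"
proof (rule convex_onI[OF _ S])
  fix u x y :: real
  assume u: "0 < u" "u < 1" and xy: "x \<in> S" "y \<in> S"
  define z where "z = (1 - u) *\<^sub>R x + u *\<^sub>R y"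
  have z: "z \<in> S"
    unfolding z_def using S xy u by (intro convexD) auto
  define A where "A = (\<Sum>k. g k x)"
  define B where "B = (\<Sum>k. g k y)"
  have A: "A > 0" and B: "B > 0"
    unfolding A_def B_def using xy by (auto intro!: suminf_pos summable pos)
  define M where "M = A powr (1 - u) * B powr u"
  have bound: "g k z \<le> M * ((1 - u) * (g k x / A) + u * (g k y / B))" for k
  proof -
    have gx: "g k x > 0" and gy: "g k y > 0"
      using pos xy by auto
    have "ln (g k z) \<le> (1 - u) * ln (g k x) + u * ln (g k y)"
      using convex_onD[OF log_convex, of u x y] u xy by (simp add: z_def)
    then have "g k z \<le> exp ((1 - u) * ln (g k x) + u * ln (g k y))"
      using pos[OF z] by (metis exp_le_cancel_iff exp_ln)
    also have "\<dots> = g k x powr (1 - u) * g k y powr u"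
      using gx gy by (simp add: powr_def exp_add)
    also have "\<dots> = M * ((g k x / A) powr (1 - u) * (g k y / B) powr u)"
      using A B by (simp add: M_def powr_divide)
    also have "\<dots> \<le> M * ((1 - u) * (g k x / A) + u * (g k y / B))"
      using gx gy A B u by (intro mult_left_mono Youngs_inequality_0) (auto simp: M_def)
    finally show ?thesis .
  qed
  have "(\<lambda>k. M * ((1 - u) * (g k x / A) + u * (g k y / B))) sums (M * ((1 - u) * (A / A) + u * (B / B)))"
    unfolding A_def B_def using xy by (intro sums_mult sums_add sums_divide summable_sums summable)
  then have "(\<Sum>k. g k z) \<le> M"
    using suminf_le[OF bound summable[OF z] sums_summable] A B by (simp add: sums_iff)
  then have "ln (\<Sum>k. g k z) \<le> ln M"
    using suminf_pos[OF summable[OF z] pos[OF z]] by simp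
  then show "ln (\<Sum>k. g k ((1 - u) *\<^sub>R x + u *\<^sub>R y)) \<le> (1 - u) * ln (\<Sum>k. g k x) + u * ln (\<Sum>k. g k y)"
    using A B by (simp add: z_def M_def A_def B_def ln_mult)
qed

lemma convex_on_ln_hyp1F1_curve:
  fixes A C :: "real \<Rightarrow> real"
  assumes S: "convex S" and A: "\<And>t. t \<in> S \<Longrightarrow> A t > 0" and C: "\<And>t. t \<in> S \<Longrightarrow> C t > 0"
    and y: "y > 0"
    and log_ratio: "\<And>j::nat. convex_on S (\<lambda>t. ln (A t + j) - ln (C t + j))"
  shows "convex_on S (\<lambda>t. ln (hyp1F1 (A t) (C t) y))"
  unfolding hyp1F1_eq_suminf
proof (rule convex_on_ln_suminf[OF S])
  show pos: "hyp1F1_coeff (A t) (C t) k * y ^ k > 0" if "t \<in> S" for k t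
    using A[OF that] C[OF that] y by (simp add: hyp1F1_coeff_pos)
  show "summable (\<lambda>k. hyp1F1_coeff (A t) (C t) k * y ^ k)" if "t \<in> S" for t
    using summable_norm_hyp1F1_series[OF C[OF that]] by (rule summable_norm_cancel)
  show "convex_on S (\<lambda>t. ln (hyp1F1_coeff (A t) (C t) k * y ^ k))" for k
  proof (induction k)
    case 0
    show ?case
      using S by (simp add: hyp1F1_coeff_def convex_on_const)
  next
    case (Suc k)
    have "convex_on S (\<lambda>t. ln (hyp1F1_coeff (A t) (C t) k * y ^ k)
            + (ln (A t + k) - ln (C t + k)) + (ln y - ln (real k + 1)))"
      using S by (intro convex_on_add Suc.IH log_ratio) (simp add: convex_on_const)
    then show ?case
    proof (rule convex_on_cong)
      fix t assume t: "t \<in> S"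
      have "A t + k > 0" "C t + k > 0" "hyp1F1_coeff (A t) (C t) k > 0"
        using A[OF t] C[OF t] by (auto simp: hyp1F1_coeff_pos)
      then show "ln (hyp1F1_coeff (A t) (C t) k * y ^ k) + (ln (A t + k) - ln (C t + k))
                   + (ln y - ln (real k + 1))
               = ln (hyp1F1_coeff (A t) (C t) (Suc k) * y ^ Suc k)"
        using y by (simp add: hyp1F1_coeff_Suc ln_mult ln_div mult_ac)
    qed
  qed
qed

lemma convex_on_ln_shift_diff:
  fixes S :: "real set"
  assumes S: "convex S" and pos: "\<And>t. t \<in> S \<Longrightarrow> t + g > 0" and gb: "g \<le> b"
  shows "convex_on S (\<lambda>t. ln (t + b) - ln (t + g))"
proof (rule convex_on_realI[where f' = "\<lambda>t. 1 / (t + b) - 1 / (t + g)"])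
  show "connected S"
    using S by (rule convex_connected)
  show "((\<lambda>t. ln (t + b) - ln (t + g)) has_real_derivative 1 / (t + b) - 1 / (t + g)) (at t)"
    if "t \<in> S" for t
    using pos[OF that] gb by (auto intro!: derivative_eq_intros)
  fix t s assume "t \<in> S" "s \<in> S" "t \<le> s"
  then have tg: "t + g > 0" and sg: "s + g > 0" and "t \<le> s"
    using pos by auto
  have "1 / (t + b) - 1 / (s + b) = (s - t) / ((t + b) * (s + b))"
    using tg sg gb by (simp add: field_simps)
  also have "\<dots> \<le> (s - t) / ((t + g) * (s + g))"
    using \<open>t \<le> s\<close> tg sg gb by (intro divide_left_mono mult_mono mult_pos_pos) auto
  also have "\<dots> = 1 / (t + g) - 1 / (s + g)"
    using tg sg by (simp add: field_simps)
  finally show "1 / (t + b) - 1 / (t + g) \<le> 1 / (s + b) - 1 / (s + g)"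
    by simp
qed

lemma convex_on_const_minus_ln_shift:
  fixes S :: "real set"
  assumes S: "convex S" and pos: "\<And>t. t \<in> S \<Longrightarrow> t + g > 0"
  shows "convex_on S (\<lambda>t. k - ln (t + g))"
proof (rule convex_on_realI[where f' = "\<lambda>t. - 1 / (t + g)"])
  show "connected S"
    using S by (rule convex_connected)
  show "((\<lambda>t. k - ln (t + g)) has_real_derivative - 1 / (t + g)) (at t)" if "t \<in> S" for t
    using pos[OF that] by (auto intro!: derivative_eq_intros)
  fix t s assume "t \<in> S" "s \<in> S" "t \<le> s"
  then show "- 1 / (t + g) \<le> - 1 / (s + g)"
    using pos by (simp add: frac_le)
qed

lemma hyp1F1_pos:
  assumes c: "c > 0" and ax: "(a \<ge> 0 \<and> x \<ge> 0) \<or> (a \<le> c \<and> x \<le> 0)"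
  shows "hyp1F1 a c x > 0"
  using ax
proof
  assume "a \<ge> 0 \<and> x \<ge> 0"
  then show ?thesis
    using hyp1F1_ge_one[of a c x] c by simp
next
  assume "a \<le> c \<and> x \<le> 0"
  then show ?thesis
    using hyp1F1_ge_one[of "c - a" c "- x"] kummer_transformation[OF c, of a x] c by simp
qed

lemma ln_hyp1F1_kummer:
  assumes "c > 0" "a \<le> c" "x \<le> 0"
  shows "ln (hyp1F1 a c x) = x + ln (hyp1F1 (c - a) c (- x))"
  using hyp1F1_ge_one[of "c - a" c "- x"] kummer_transformation[of c a x] assms by (simp add: ln_mult)

lemma convex_on_ln_hyp1F1_lower_param:
  assumes "(a > 0 \<and> x > 0) \<or> (a < 0 \<and> x < 0)"
  shows "convex_on {0<..} (\<lambda>c. ln (hyp1F1 a c x))"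
  using assms
proof
  assume "a > 0 \<and> x > 0"
  then show ?thesis
    by (intro convex_on_ln_hyp1F1_curve convex_on_const_minus_ln_shift) auto
next
  assume ax: "a < 0 \<and> x < 0"
  have "convex_on {0<..} (\<lambda>c. x + ln (hyp1F1 (c - a) c (- x)))"
  proof (intro convex_on_add convex_on_ln_hyp1F1_curve)
    show "convex_on {0<..} (\<lambda>c. ln (c - a + real j) - ln (c + real j))" for j
      using convex_on_ln_shift_diff[of "{0<..}" "real j" "real j - a"] ax by (simp add: algebra_simps)
  qed (use ax in \<open>auto simp: convex_on_const\<close>)
  then show ?thesis
    by (rule convex_on_cong) (use ax in \<open>simp add: ln_hyp1F1_kummer\<close>)
qed

lemma convex_on_ln_hyp1F1_diagonal:
  assumes c: "c > 0" and ax: "(a \<ge> c \<and> x > 0) \<or> (a \<le> c \<and> x \<le> 0)"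
  shows "convex_on {0..} (\<lambda>\<mu>. ln (hyp1F1 (a + \<mu>) (c + \<mu>) x))"
  using ax
proof
  assume ax: "a \<ge> c \<and> x > 0"
  show ?thesis
  proof (intro convex_on_ln_hyp1F1_curve)
    show "convex_on {0..} (\<lambda>\<mu>. ln (a + \<mu> + real j) - ln (c + \<mu> + real j))" for j
      using convex_on_ln_shift_diff[of "{0..}" "c + real j" "a + real j"] ax c by (simp add: algebra_simps)
  qed (use ax c in auto)
next
  assume ax: "a \<le> c \<and> x \<le> 0"
  have "convex_on {0..} (\<lambda>\<mu>. ln (hyp1F1 (c - a) (c + \<mu>) (- x)))"
  proof (cases "a = c \<or> x = 0")
    case True
    then show ?thesis
      by (auto simp: hyp1F1_zero_left hyp1F1_zero_right convex_on_const)
  next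
    case False
    show ?thesis
    proof (intro convex_on_ln_hyp1F1_curve)
      show "convex_on {0..} (\<lambda>\<mu>. ln (c - a + real j) - ln (c + \<mu> + real j))" for j
        using convex_on_const_minus_ln_shift[of "{0..}" "c + real j"] c by (simp add: algebra_simps)
    qed (use ax c False in auto)
  qed
  then have "convex_on {0..} (\<lambda>\<mu>. x + ln (hyp1F1 (c - a) (c + \<mu>) (- x)))"
    by (intro convex_on_add) (simp_all add: convex_on_const)
  then show ?thesis
    by (rule convex_on_cong) (use ax c in \<open>simp add: ln_hyp1F1_kummer\<close>)
qed

lemma convex_on_shift_diff_mono:
  fixes f :: "real \<Rightarrow> real"
  assumes f: "convex_on S f" and S: "x \<in> S" "y + d \<in> S" and xy: "x \<le> y" and d: "d > 0"
  shows "f (x + d) - f x \<le> f (y + d) - f y"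
proof -
  define l where "l = d / (y + d - x)"
  have L: "y + d - x > 0"
    using xy d by simp
  then have l: "0 \<le> l" "l \<le> 1" and lL: "l * (y + d - x) = d"
    using xy d by (auto simp: l_def divide_le_eq)
  have "(1 - l) *\<^sub>R x + l *\<^sub>R (y + d) = x + l * (y + d - x)"
    "(1 - (1 - l)) *\<^sub>R x + (1 - l) *\<^sub>R (y + d) = y + d - l * (y + d - x)"
    by (simp_all add: algebra_simps)
  then have "(1 - l) *\<^sub>R x + l *\<^sub>R (y + d) = x + d" "(1 - (1 - l)) *\<^sub>R x + (1 - l) *\<^sub>R (y + d) = y"
    unfolding lL by simp_all
  then have "f (x + d) \<le> (1 - l) * f x + l * f (y + d)" "f y \<le> (1 - (1 - l)) * f x + (1 - l) * f (y + d)"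
    using convex_onD[OF f, of l x "y + d"] convex_onD[OF f, of "1 - l" x "y + d"] l S by simp_all
  then show ?thesis
    by (simp add: algebra_simps)
qed

lemma mono_on_shift_ratio_of_log_convex:
  fixes F :: "real \<Rightarrow> real"
  assumes log_convex: "convex_on S (\<lambda>t. ln (F t))" and pos: "\<And>t. t \<in> S \<Longrightarrow> F t > 0"
    and shift: "\<And>t. t \<in> S \<Longrightarrow> t + d \<in> S" and d: "d > 0"
  shows "mono_on S (\<lambda>t. F (t + d) / F t)"
proof (rule mono_onI)
  fix r s assume r: "r \<in> S" and s: "s \<in> S" and "r \<le> s"
  then have "ln (F (r + d)) - ln (F r) \<le> ln (F (s + d)) - ln (F s)"
    using convex_on_shift_diff_mono[OF log_convex] shift d by blast
  moreover have "F r > 0" "F s > 0" "F (r + d) > 0" "F (s + d) > 0"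
    using pos r s shift by auto
  ultimately have "ln (F (r + d) / F r) \<le> ln (F (s + d) / F s)"
    by (simp add: ln_div)
  then show "F (r + d) / F r \<le> F (s + d) / F s"
    using \<open>F r > 0\<close> \<open>F s > 0\<close> \<open>F (r + d) > 0\<close> \<open>F (s + d) > 0\<close> by simp
qed

lemma log_convex_midpoint:
  fixes F :: "real \<Rightarrow> real"
  assumes log_convex: "convex_on S (\<lambda>t. ln (F t))" and pos: "\<And>t. t \<in> S \<Longrightarrow> F t > 0"
    and S: "x \<in> S" "y \<in> S"
  shows "F ((x + y) / 2) ^ 2 \<le> F x * F y"
proof -
  have m: "(x + y) / 2 \<in> S"
    using convexD[OF convex_on_imp_convex[OF log_convex] S, of "1/2" "1/2"] by (simp add: add_divide_distrib)
  have "ln (F ((x + y) / 2)) \<le> (1 - 1/2) * ln (F x) + (1/2) * ln (F y)"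
    using convex_onD[OF log_convex, of "1/2" x y] S by (simp add: add_divide_distrib)
  moreover have "F x > 0" "F y > 0" "F ((x + y) / 2) > 0"
    using pos S m by auto
  ultimately have "ln (F ((x + y) / 2) ^ 2) \<le> ln (F x * F y)"
    by (simp add: ln_mult power2_eq_square)
  then show ?thesis
    using \<open>F x > 0\<close> \<open>F y > 0\<close> \<open>F ((x + y) / 2) > 0\<close> by simp
qed

lemma mono_on_hyp1F1_lower_shift_ratio:
  assumes "(a > 0 \<and> x > 0) \<or> (a < 0 \<and> x < 0)" "\<delta> > 0"
  shows "mono_on {0<..} (\<lambda>c. hyp1F1 a (c + \<delta>) x / hyp1F1 a c x)"
  using assms by (intro mono_on_shift_ratio_of_log_convex convex_on_ln_hyp1F1_lower_param hyp1F1_pos) auto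

lemma hyp1F1_diagonal_shift_turan:
  assumes c: "c > 0" and ax: "(a \<ge> c \<and> x > 0) \<or> (a \<le> c \<and> x \<le> 0)" and \<delta>: "\<delta> \<ge> 0"
  shows "(hyp1F1 (a + \<delta>) (c + \<delta>) x)\<^sup>2 \<le> hyp1F1 (a + 2 * \<delta>) (c + 2 * \<delta>) x * hyp1F1 a c x"
proof -
  have "hyp1F1 (a + \<mu>) (c + \<mu>) x > 0" if "\<mu> \<in> {0..}" for \<mu>
    using that c ax by (intro hyp1F1_pos) auto
  from log_convex_midpoint[OF convex_on_ln_hyp1F1_diagonal[OF c ax] this, of "2 * \<delta>" 0]
  show ?thesis
    using \<delta> by simp
qed

section \<open>Coefficients of products\<close>

definition hyp1F1_prod_coeff :: "real \<Rightarrow> real \<Rightarrow> real \<Rightarrow> nat \<Rightarrow> real" where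
  "hyp1F1_prod_coeff a c d n = (\<Sum>i\<le>n. hyp1F1_coeff a c i * hyp1F1_coeff a d (n - i))"

lemma hyp1F1_mult_sums:
  assumes "c > 0" "d > 0"
  shows "(\<lambda>n. hyp1F1_prod_coeff a c d n * x ^ n) sums (hyp1F1 a c x * hyp1F1 a d x)"
proof -
  have "(\<lambda>n. \<Sum>i\<le>n. hyp1F1_coeff a c i * x ^ i * (hyp1F1_coeff a d (n - i) * x ^ (n - i)))
          sums (hyp1F1 a c x * hyp1F1 a d x)"
    unfolding hyp1F1_eq_suminf
    by (intro Cauchy_product_sums summable_norm_hyp1F1_series) (use assms in auto)
  moreover have "(\<Sum>i\<le>n. hyp1F1_coeff a c i * x ^ i * (hyp1F1_coeff a d (n - i) * x ^ (n - i)))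
      = hyp1F1_prod_coeff a c d n * x ^ n" for n
    unfolding hyp1F1_prod_coeff_def sum_distrib_right
  proof (rule sum.cong[OF refl])
    fix i assume "i \<in> {..n}"
    then have "x ^ i * x ^ (n - i) = x ^ n"
      by (metis atMost_iff le_add_diff_inverse power_add)
    then show "hyp1F1_coeff a c i * x ^ i * (hyp1F1_coeff a d (n - i) * x ^ (n - i))
        = hyp1F1_coeff a c i * hyp1F1_coeff a d (n - i) * x ^ n"
      by (metis mult.assoc mult.left_commute)
  qed
  ultimately show ?thesis
    by simp
qed

lemma pochhammer_ratio_antimono:
  fixes c d :: real
  assumes "0 < c" "c \<le> d" "k \<le> l"
  shows "pochhammer c l / pochhammer d l \<le> pochhammer c k / pochhammer d k"
proof -
  have "decseq (\<lambda>n. pochhammer c n / pochhammer d n)"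
  proof (rule decseq_SucI)
    fix n
    have "pochhammer c (Suc n) / pochhammer d (Suc n)
        = pochhammer c n / pochhammer d n * ((c + n) / (d + n))"
      by (simp add: pochhammer_Suc)
    also have "\<dots> \<le> pochhammer c n / pochhammer d n"
      using assms by (intro mult_left_le) (auto intro!: divide_nonneg_pos pochhammer_nonneg pochhammer_pos)
    finally show "pochhammer c (Suc n) / pochhammer d (Suc n) \<le> pochhammer c n / pochhammer d n" .
  qed
  then show ?thesis
    using assms(3) by (simp add: decseq_def)
qed

lemma pochhammer_shift_ratio_eq_prod:
  fixes z e :: real
  shows "pochhammer z k / pochhammer (z + e) k = (\<Prod>j<k. (z + real j) / (z + real j + e))"
  by (simp add: pochhammer_prod prod_dividef atLeast0LessThan ac_simps)

lemma divide_add_right_mono: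
  fixes c d e :: real
  assumes "0 < c" "c \<le> d" "0 \<le> e"
  shows "c / (c + e) \<le> d / (d + e)"
  using assms mult_left_mono[OF assms(2,3)] by (simp add: divide_le_eq le_divide_eq field_simps)

lemma divide_add_right_strict_mono:
  fixes c d e :: real
  assumes "0 < c" "c < d" "0 < e"
  shows "c / (c + e) < d / (d + e)"
  using assms by (simp add: divide_less_eq less_divide_eq field_simps)

lemma pochhammer_shift_ratio_mono:
  fixes c d e :: real
  assumes "0 < c" "c \<le> d" "0 \<le> e"
  shows "pochhammer c k / pochhammer (c + e) k \<le> pochhammer d k / pochhammer (d + e) k"
  unfolding pochhammer_shift_ratio_eq_prod
  using assms by (intro prod_mono conjI divide_add_right_mono divide_nonneg_pos) auto

lemma pochhammer_shift_ratio_strict_mono: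
  fixes c d e :: real
  assumes "0 < c" "c < d" "0 < e" "k \<noteq> 0"
  shows "pochhammer c k / pochhammer (c + e) k < pochhammer d k / pochhammer (d + e) k"
  unfolding pochhammer_shift_ratio_eq_prod
proof (rule prod_mono_strict)
  show "0 \<in> {..<k}"
    using assms(4) by simp
  show "(c + real 0) / (c + real 0 + e) < (d + real 0) / (d + real 0 + e)"
    using assms by (simp add: divide_add_right_strict_mono)
qed (use assms in \<open>auto intro!: divide_add_right_mono divide_nonneg_pos\<close>)

lemma pochhammer_cross_sum_neg:
  fixes c d e :: real
  assumes c: "0 < c" and cd: "c < d" and e: "0 < e" and kl: "k + l \<noteq> 0"
  shows "(1 / (pochhammer (c + e) k * pochhammer d l) - 1 / (pochhammer (d + e) k * pochhammer c l))
       + (1 / (pochhammer (c + e) l * pochhammer d k) - 1 / (pochhammer (d + e) l * pochhammer c k)) < 0"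
proof -
  define r where "r z n = pochhammer z n / pochhammer (z + e) n" for z n
  have pos: "pochhammer z n > 0" if "z > 0" for z :: real and n
    using that by (rule pochhammer_pos)
  have ordered: "(1 / (pochhammer (c + e) k * pochhammer d l) - 1 / (pochhammer (d + e) k * pochhammer c l))
       + (1 / (pochhammer (c + e) l * pochhammer d k) - 1 / (pochhammer (d + e) l * pochhammer c k)) < 0"
    if le: "k \<le> l" and l: "l \<noteq> 0" for k l
  proof -
    define X where "X = 1 / (pochhammer c k * pochhammer d l)"
    define Y where "Y = 1 / (pochhammer c l * pochhammer d k)"
    have split: "(1 / (pochhammer (c + e) k * pochhammer d l) - 1 / (pochhammer (d + e) k * pochhammer c l))
         + (1 / (pochhammer (c + e) l * pochhammer d k) - 1 / (pochhammer (d + e) l * pochhammer c k))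
       = X * ((r c k - r d k) + (r c l - r d l)) + (Y - X) * (r c l - r d k)"
      using pos[OF c, of k] pos[OF c, of l] pos[of d k] pos[of d l] pos[of "c + e" k] pos[of "c + e" l]
        pos[of "d + e" k] pos[of "d + e" l] c cd e
      by (simp add: X_def Y_def r_def field_simps)
    have "X > 0"
      using pos[OF c] pos[of d] c cd by (simp add: X_def)
    moreover have "r c k - r d k \<le> 0" "r c l - r d l < 0"
      unfolding r_def using pochhammer_shift_ratio_mono[OF c _ e[THEN less_imp_le], of d k]
        pochhammer_shift_ratio_strict_mono[OF c cd e l] cd by auto
    moreover have "X \<le> Y"
      using pochhammer_ratio_antimono[OF c _ le, of d] cd pos[OF c] pos[of d] c
      by (simp add: X_def Y_def divide_le_eq le_divide_eq field_simps)
    moreover have "r c l - r d k \<le> 0"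
      using pochhammer_ratio_antimono[OF c _ le, of "c + e"] e
        pochhammer_shift_ratio_mono[OF c _ e[THEN less_imp_le], of d k] cd
      unfolding r_def by linarith
    ultimately show ?thesis
      unfolding split by (smt (verit) mult_pos_neg mult_nonneg_nonpos)
  qed
  show ?thesis
  proof (cases "k \<le> l")
    case True
    then show ?thesis using ordered[of k l] kl by simp
  next
    case False
    then show ?thesis using ordered[of l k] by simp
  qed
qed

lemma sum_atMost_reflect: "(\<Sum>i\<le>n. f i) = (\<Sum>i\<le>n. f (n - i))"
  for f :: "nat \<Rightarrow> 'a::comm_monoid_add"
  by (rule sum.reindex_bij_witness[where i = "\<lambda>i. n - i" and j = "\<lambda>i. n - i"]) auto

lemma hyp1F1_prod_coeff_diff_neg:
  assumes a: "a > 0" and c: "0 < c" and cd: "c < d" and e: "0 < e" and n: "n \<noteq> 0"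
  shows "hyp1F1_prod_coeff a (c + e) d n < hyp1F1_prod_coeff a (d + e) c n"
proof -
  define w where "w i = pochhammer a i / fact i * (pochhammer a (n - i) / fact (n - i))" for i
  define T where "T k l = 1 / (pochhammer (c + e) k * pochhammer d l)
                            - 1 / (pochhammer (d + e) k * pochhammer c l)" for k l
  define D where "D = hyp1F1_prod_coeff a (c + e) d n - hyp1F1_prod_coeff a (d + e) c n"
  have D: "D = (\<Sum>i\<le>n. w i * T i (n - i))"
    unfolding D_def hyp1F1_prod_coeff_def sum_subtractf[symmetric]
    by (intro sum.cong refl)
      (simp add: hyp1F1_coeff_def w_def T_def divide_inverse right_diff_distrib ac_simps)
  also have "\<dots> = (\<Sum>i\<le>n. w i * T (n - i) i)"
    by (subst sum_atMost_reflect) (simp add: w_def mult.commute)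
  finally have "2 * D = (\<Sum>i\<le>n. w i * (T i (n - i) + T (n - i) i))"
    using D by (simp add: sum.distrib distrib_left)
  also have "\<dots> < (\<Sum>i\<le>n. 0)"
  proof (rule sum_strict_mono)
    fix i assume "i \<in> {..n}"
    then have "i + (n - i) \<noteq> 0"
      using n by simp
    note pair_neg = pochhammer_cross_sum_neg[OF c cd e this]
    have "w i > 0"
      using a by (simp add: w_def pochhammer_pos)
    moreover have "T i (n - i) + T (n - i) i < 0"
      unfolding T_def using pair_neg by simp
    ultimately show "w i * (T i (n - i) + T (n - i) i) < 0"
      by (rule mult_pos_neg)
  qed auto
  finally show ?thesis
    by (simp add: D_def)
qed

section \<open>The terminating 4F3\<close>

lemma pochhammer_reflect_div:
  fixes z :: "'a::field"
  assumes "i \<le> m" "pochhammer z (m - i) \<noteq> 0"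
  shows "pochhammer (1 - z - of_nat m) i = (-1) ^ i * pochhammer z m / pochhammer z (m - i)"
  using pochhammer_reflect[OF assms(1), of z] assms(2) by (simp add: eq_divide_eq)

lemma pochhammer_times_shift:
  "pochhammer z n * (z + of_nat n) = z * pochhammer (z + 1) n"
  for z :: "'a::comm_semiring_1"
  by (simp flip: pochhammer_Suc add: pochhammer_rec)

lemma hyp4F3_d_eq_sum:
  fixes a c d :: real and m :: nat
  assumes a: "a > 0" and d: "d > 0"
  defines "t \<equiv> c * real m / (c + d)"
  shows "hyp4F3_d a c d m = fact m * pochhammer (d + 1) m / pochhammer a m *
    (\<Sum>i\<le>m. pochhammer a i * pochhammer a (m - i)
              / (fact i * fact (m - i) * pochhammer (c + 1) i * pochhammer (d + 1) (m - i))
              * ((t - i) / t))"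
  unfolding hyp4F3_d_def Let_def t_def[symmetric] atLeast0AtMost sum_distrib_left
proof (rule sum.cong[OF refl])
  fix i assume "i \<in> {..m}"
  then have i: "i \<le> m" by simp
  have pos: "pochhammer z k > 0" if "z > 0" for z :: real and k
    using that by (rule pochhammer_pos)
  have dm: "pochhammer (- d - real m) i = (-1) ^ i * pochhammer (d + 1) m / pochhammer (d + 1) (m - i)"
    using pochhammer_reflect_div[OF i, of "d + 1"] pos[of "d + 1" "m - i"] d by (simp add: algebra_simps)
  have am: "pochhammer (1 - a - real m) i = (-1) ^ i * pochhammer a m / pochhammer a (m - i)"
    using pochhammer_reflect_div[OF i, of a] pos[OF a, of "m - i"] by simp
  define R where "R = (t - real i) / t"
  show "pochhammer (- real m) i * pochhammer (- d - real m) i * pochhammer a i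
        / (pochhammer (1 - a - real m) i * pochhammer (c + 1) i) * ((t - real i) / t) * (-1) ^ i / fact i
      = fact m * pochhammer (d + 1) m / pochhammer a m *
        (pochhammer a i * pochhammer a (m - i)
          / (fact i * fact (m - i) * pochhammer (c + 1) i * pochhammer (d + 1) (m - i))
          * ((t - i) / t))"
    using pos[OF a, of m] pos[OF a, of "m - i"] pos[of "d + 1" m] pos[of "d + 1" "m - i"] d
    unfolding pochhammer_minus_of_nat[OF i] dm am R_def[symmetric]
    \<comment> \<open>the four signs (-1)^i cancel\<close>
    by (cases "even i") (simp_all add: field_simps)
qed

lemma hyp1F1_prod_coeff_shift_diff_eq_sum:
  fixes a c d :: real and m :: nat
  assumes c: "c > 0" and d: "d > 0" and m: "m \<noteq> 0"
  defines "t \<equiv> c * real m / (c + d)"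
  shows "hyp1F1_prod_coeff a (c + 1) d m - hyp1F1_prod_coeff a (d + 1) c m = real m / d *
    (\<Sum>i\<le>m. pochhammer a i * pochhammer a (m - i)
              / (fact i * fact (m - i) * pochhammer (c + 1) i * pochhammer (d + 1) (m - i))
              * ((t - i) / t))"
proof -
  have "hyp1F1_prod_coeff a (d + 1) c m = (\<Sum>i\<le>m. hyp1F1_coeff a c i * hyp1F1_coeff a (d + 1) (m - i))"
    unfolding hyp1F1_prod_coeff_def by (subst sum_atMost_reflect) (auto intro!: sum.cong)
  then have "hyp1F1_prod_coeff a (c + 1) d m - hyp1F1_prod_coeff a (d + 1) c m
      = (\<Sum>i\<le>m. hyp1F1_coeff a (c + 1) i * hyp1F1_coeff a d (m - i)
                  - hyp1F1_coeff a c i * hyp1F1_coeff a (d + 1) (m - i))"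
    by (simp add: hyp1F1_prod_coeff_def sum_subtractf)
  also have "\<dots> = (\<Sum>i\<le>m. real m / d * (pochhammer a i * pochhammer a (m - i)
              / (fact i * fact (m - i) * pochhammer (c + 1) i * pochhammer (d + 1) (m - i))
              * ((t - i) / t)))"
  proof (rule sum.cong[OF refl])
    fix i assume "i \<in> {..m}"
    then have i: "real i \<le> real m"
      by simp
    have pos: "pochhammer z k > 0" if "z > 0" for z :: real and k
      using that by (rule pochhammer_pos)
    have pd: "pochhammer d (m - i) = d * pochhammer (d + 1) (m - i) / (d + (real m - real i))"
      using pochhammer_times_shift[of d "m - i"] i d by (simp add: of_nat_diff eq_divide_eq)
    have pc: "pochhammer c i = c * pochhammer (c + 1) i / (c + real i)"
      using pochhammer_times_shift[of c i] c by (simp add: eq_divide_eq)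
    \<comment> \<open>t is the zero in i of this linear factor\<close>
    have key: "(d + (real m - real i)) / d - (c + real i) / c = real m / d * ((t - real i) / t)"
    proof -
      have t: "(t - real i) / t = (c * real m - real i * (c + d)) / (c * real m)"
        using c d m by (simp add: t_def divide_simps)
      show ?thesis
        unfolding t using c d m by (simp add: field_simps)
    qed
    have "hyp1F1_coeff a (c + 1) i * hyp1F1_coeff a d (m - i)
                  - hyp1F1_coeff a c i * hyp1F1_coeff a (d + 1) (m - i)
        = pochhammer a i * pochhammer a (m - i)
              / (fact i * fact (m - i) * pochhammer (c + 1) i * pochhammer (d + 1) (m - i))
          * ((d + (real m - real i)) / d - (c + real i) / c)"
      unfolding hyp1F1_coeff_def pd pc
      using pos[of "c + 1" i] pos[of "d + 1" "m - i"] c d i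
      by (simp add: field_simps)
    then show "hyp1F1_coeff a (c + 1) i * hyp1F1_coeff a d (m - i)
                  - hyp1F1_coeff a c i * hyp1F1_coeff a (d + 1) (m - i)
        = real m / d * (pochhammer a i * pochhammer a (m - i)
              / (fact i * fact (m - i) * pochhammer (c + 1) i * pochhammer (d + 1) (m - i))
              * ((t - i) / t))"
      unfolding key by (simp only: ac_simps)
  qed
  finally show ?thesis
    by (simp add: sum_distrib_left)
qed

lemma hyp1F1_prod_coeff_shift_diff_eq_hyp4F3_d:
  assumes a: "a > 0" and c: "c > 0" and d: "d > 0" and m: "m \<noteq> 0"
  shows "hyp1F1_prod_coeff a (c + 1) d m - hyp1F1_prod_coeff a (d + 1) c m
       = real m / d * pochhammer a m / (fact m * pochhammer (d + 1) m) * hyp4F3_d a c d m"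
  using pochhammer_pos[OF a, of m] pochhammer_pos[of "d + 1" m] d
  unfolding hyp1F1_prod_coeff_shift_diff_eq_sum[OF c d m] hyp4F3_d_eq_sum[OF a d]
  by (simp add: field_simps)

lemma hyp4F3_d_pos:
  assumes a: "a > 0" and d: "0 < d" and dc: "d < c" and m: "m \<noteq> 0"
  shows "hyp4F3_d a c d m > 0"
proof -
  define K where "K = real m / d * pochhammer a m / (fact m * pochhammer (d + 1) m)"
  have "K > 0"
    using pochhammer_pos[OF a, of m] pochhammer_pos[of "d + 1" m] d m by (simp add: K_def)
  moreover have "K * hyp4F3_d a c d m > 0"
    unfolding K_def hyp1F1_prod_coeff_shift_diff_eq_hyp4F3_d[OF a order.strict_trans[OF d dc] d m, symmetric]
    using hyp1F1_prod_coeff_diff_neg[OF a d dc zero_less_one m] by simp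
  ultimately show ?thesis
    by (simp add: zero_less_mult_iff)
qed

lemma hyp4F3_d_neg:
  assumes a: "a > 0" and c: "0 < c" and cd: "c < d" and m: "m \<noteq> 0"
  shows "hyp4F3_d a c d m < 0"
proof -
  define K where "K = real m / d * pochhammer a m / (fact m * pochhammer (d + 1) m)"
  have "K > 0"
    using pochhammer_pos[OF a, of m] pochhammer_pos[of "d + 1" m] c cd m by (simp add: K_def)
  moreover have "K * hyp4F3_d a c d m < 0"
    unfolding K_def hyp1F1_prod_coeff_shift_diff_eq_hyp4F3_d[OF a c order.strict_trans[OF c cd] m, symmetric]
    using hyp1F1_prod_coeff_diff_neg[OF a c cd zero_less_one m] by simp
  ultimately show ?thesis
    by (simp add: mult_less_0_iff)
qed

lemma hyp1F1_prod_difference_series: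
  assumes a: "0 < a" and c: "0 < c" and cd: "c < d" and \<delta>: "0 < \<delta>"
  shows "\<exists>b :: nat \<Rightarrow> real. b 0 = 0 \<and> (\<forall>n\<ge>1. b n < 0) \<and>
           (\<forall>x. (\<lambda>n. b n * x ^ n) sums
                 (hyp1F1 a (c + \<delta>) x * hyp1F1 a d x - hyp1F1 a (d + \<delta>) x * hyp1F1 a c x))"
proof (intro exI conjI allI impI)
  define b where "b n = hyp1F1_prod_coeff a (c + \<delta>) d n - hyp1F1_prod_coeff a (d + \<delta>) c n" for n
  show "b 0 = 0"
    by (simp add: b_def hyp1F1_prod_coeff_def hyp1F1_coeff_def)
  show "b n < 0" if "n \<ge> 1" for n
    using hyp1F1_prod_coeff_diff_neg[OF a c cd \<delta>] that by (simp add: b_def)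
  show "(\<lambda>n. b n * x ^ n) sums
          (hyp1F1 a (c + \<delta>) x * hyp1F1 a d x - hyp1F1 a (d + \<delta>) x * hyp1F1 a c x)" for x
    using sums_diff[OF hyp1F1_mult_sums[of "c + \<delta>" d a x] hyp1F1_mult_sums[of "d + \<delta>" c a x]] c cd \<delta>
    by (simp add: b_def left_diff_distrib)
qed

theorem theorem5:
  fixes \<delta> :: real
  assumes \<delta>: "\<delta> > 0"
  shows
    \<comment> \<open>(a)\<close>
    "(\<forall>a c d. d > c \<and> c > 0 \<and> a > 0 \<longrightarrow>
        (\<exists>b :: nat \<Rightarrow> real. b 0 = 0 \<and> (\<forall>n\<ge>1. b n < 0) \<and>
           (\<forall>x. (\<lambda>n. b n * x ^ n) sums
                 (hyp1F1 a (c + \<delta>) x * hyp1F1 a d x - hyp1F1 a (d + \<delta>) x * hyp1F1 a c x))))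
   \<and> \<comment> \<open>(b)\<close>
    (\<forall>a x. (a > 0 \<and> x > 0) \<or> (a < 0 \<and> x < 0) \<longrightarrow>
        mono_on {0<..} (\<lambda>c. hyp1F1 a (c + \<delta>) x / hyp1F1 a c x) \<and>
        convex_on {0<..} (\<lambda>c. ln (hyp1F1 a c x)))
   \<and> \<comment> \<open>(c)\<close>
    (\<forall>a c x. (a \<ge> c \<and> c > 0 \<and> x > 0) \<or> (a \<le> c \<and> c > 0 \<and> x \<le> 0) \<longrightarrow>
        (hyp1F1 (a + \<delta>) (c + \<delta>) x)\<^sup>2 \<le> hyp1F1 (a + 2 * \<delta>) (c + 2 * \<delta>) x * hyp1F1 a c x \<and>
        convex_on {0..} (\<lambda>\<mu>. ln (hyp1F1 (a + \<mu>) (c + \<mu>) x)))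
   \<and> \<comment> \<open>(d)\<close>
    (\<forall>a c d (m::nat). a > 0 \<and> m \<ge> 1 \<longrightarrow>
        (c > d \<and> d > 0 \<longrightarrow> hyp4F3_d a c d m > 0) \<and>
        (d > c \<and> c > 0 \<longrightarrow> hyp4F3_d a c d m < 0))"
  using \<delta>
  apply (intro conjI allI impI)
  subgoal by (rule hyp1F1_prod_difference_series) auto
  subgoal by (rule mono_on_hyp1F1_lower_shift_ratio) auto
  subgoal by (rule convex_on_ln_hyp1F1_lower_param) auto
  subgoal by (rule hyp1F1_diagonal_shift_turan) auto
  subgoal by (rule convex_on_ln_hyp1F1_diagonal) auto
  subgoal by (rule hyp4F3_d_pos) auto
  subgoal by (rule hyp4F3_d_neg) auto
  done

end
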